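(* Let $p=p(n)$ satisfy $6/n\le p(n)<1$ and $p(n)\log n\to 0$ as $n\to\infty$, and let $G\sim D(n,p)$. Then with probability $1-o(1)$, $$h_1(G)\ge \frac{p^{-1}}{20\log(p^{-1})}\quad\text{and}\quad h_2(G)\ge\frac{p^{-1}}{\log^2(p^{-1})}.$$
   Context: $D(n,p)$ is the distribution on DAGs with vertex set $\{1,\dots,n\}$ assigning each DAG with $e$ edges probability proportional to $(p/(1-p))^e$. The tower decomposition of a DAG is $(H_1,\dots,H_s)$ with $H_1$ the set of sources (vertices without parents), $H_2$ the set of sources of the graph with $H_1$ removed, and so on; $h_i(G)=|H_i|$ (with $h_2(G)=0$ if $s=1$). $\log$ is the natural logarithm. *)

theory Defs
  imports Complex_Main
begin

text \<open>A DAG on vertex set {1..n} is represented by its set of directed edges (u,v)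
  (meaning u is a parent of v), an acyclic relation on {1..n}.\<close>

definition dags :: "nat \<Rightarrow> (nat \<times> nat) set set" where
  "dags n = {E. E \<subseteq> {1..n} \<times> {1..n} \<and> acyclic E}"

definition dag_weight :: "real \<Rightarrow> (nat \<times> nat) set \<Rightarrow> real" where
  "dag_weight p E = (p / (1 - p)) ^ card E"

definition dag_prob :: "nat \<Rightarrow> real \<Rightarrow> ((nat \<times> nat) set \<Rightarrow> bool) \<Rightarrow> real" where
  "dag_prob n p P =
     (\<Sum>E\<in>{E \<in> dags n. P E}. dag_weight p E) / (\<Sum>E\<in>dags n. dag_weight p E)"

definition sources :: "nat set \<Rightarrow> (nat \<times> nat) set \<Rightarrow> nat set" where
  "sources V E = {v \<in> V. \<not> (\<exists>u\<in>V. (u, v) \<in> E)}"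

definition H1 :: "nat \<Rightarrow> (nat \<times> nat) set \<Rightarrow> nat set" where
  "H1 n E = sources {1..n} E"

definition H2 :: "nat \<Rightarrow> (nat \<times> nat) set \<Rightarrow> nat set" where
  "H2 n E = sources ({1..n} - H1 n E) E"

definition h1 :: "nat \<Rightarrow> (nat \<times> nat) set \<Rightarrow> nat" where
  "h1 n E = card (H1 n E)"

definition h2 :: "nat \<Rightarrow> (nat \<times> nat) set \<Rightarrow> nat" where
  "h2 n E = card (H2 n E)"

end

theory Submission
  imports Defs "HOL-Library.FuncSet" "HOL-Real_Asymp.Real_Asymp"
begin

(* With q = p/(1-p), D(n,p) gives a DAG G the weight q^|G|, so every probability is a ratio of
   weights, and the total weight is at least (1+q)^(floor(n/2) ceil(n/2)), the weight of all
   subgraphs of a complete bipartite DAG.  Each way of failing is bounded by an injective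
   encoding into a DAG G' together with a large edge set D inside a small square:

   - h1 <= m: enlarge the sources to a parent-closed set U of size u.  Deleting the edges inside
     U makes U exactly the set of sources, and at least u - m edges are deleted, one into each
     non-source of U.  So G |-> (G - U x U, G restricted to U) lands in pairs with
     h1 G' = u and D a subset of H1 G' x H1 G' with |D| >= u - m.
   - h1 >= k, h2 <= m: the same one level higher.  Vertices of U that lose all their parents
     would become sources, so each of them is re-attached to a source, in all h1^|orphans|
     possible ways; summed over these choices the added edges cost a factor of at most
     min(1, k q)^(-u).
   - h1 > n - u: all edges end in fewer than u vertices, which has weight at most
     u n^u (1+q)^(nu), negligible against (1+q)^(n^2/4) as long as u log n = O(p n^2).

   The subsets of size >= r of an N-set weigh at most (e t e^t)^r in total when N q <= r t.  With
   X = 1/p -> oo, taking u ~ 2X/(20 log X) resp. u ~ 4X/log^2 X makes t = O(1/log X) resp.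
   O(1/log^2 X), and all three failure probabilities tend to 0. *)

section \<open>Weighted sums over subsets\<close>

lemma sum_power_card_Pow:
  fixes q :: "'a::comm_semiring_1"
  assumes "finite X"
  shows "(\<Sum>D\<in>Pow X. q ^ card D) = (1 + q) ^ card X"
  using prod_add[OF assms, of "\<lambda>_. q" "\<lambda>_. 1"] by (simp add: add.commute)

lemma sum_mono_inj_on:
  fixes f :: "'a \<Rightarrow> 'c::ordered_comm_monoid_add"
  assumes "finite B" "inj_on \<phi> A" "\<phi> ` A \<subseteq> B"
    and "\<And>x. x \<in> A \<Longrightarrow> f x \<le> g (\<phi> x)" "\<And>y. y \<in> B \<Longrightarrow> 0 \<le> g y"
  shows "(\<Sum>x\<in>A. f x) \<le> (\<Sum>y\<in>B. g y)"
proof -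
  have "finite A" using assms(1-3) finite_imageD finite_subset by metis
  then have "(\<Sum>x\<in>A. f x) \<le> (\<Sum>x\<in>A. g (\<phi> x))" by (intro sum_mono assms(4))
  also have "\<dots> = (\<Sum>y\<in>\<phi> ` A. g y)" by (simp add: sum.reindex[OF assms(2)])
  also have "\<dots> \<le> (\<Sum>y\<in>B. g y)" using assms(1,3,5) by (intro sum_mono2) auto
  finally show ?thesis .
qed

lemma power_div_fact_le_exp:
  fixes x :: real
  assumes "0 \<le> x"
  shows "x ^ r / fact r \<le> exp x"
proof -
  have "x ^ r / fact r \<le> (\<Sum>n<Suc r. x ^ n / fact n)"
    using assms by (intro member_le_sum) auto
  also have "\<dots> \<le> (\<Sum>n. x ^ n / fact n)"
    using assms summable_exp[of x] by (intro sum_le_suminf) (auto simp: field_simps)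
  also have "\<dots> = exp x"
    using exp_converges[of x] by (simp add: sums_iff field_simps)
  finally show ?thesis .
qed

lemma sum_power_card_large_subsets_le:
  fixes q :: real
  assumes "finite X" "0 \<le> q"
  shows "(\<Sum>D | D \<subseteq> X \<and> r \<le> card D. q ^ card D) \<le> (card X choose r) * q ^ r * (1 + q) ^ card X"
proof -
  let ?A = "{D. D \<subseteq> X \<and> r \<le> card D}" and ?R = "{R. R \<subseteq> X \<and> card R = r}"
  have "\<exists>R. R \<subseteq> D \<and> card R = r" if "D \<in> ?A" for D
    using that by (auto intro: obtain_subset_with_card_n)
  then obtain R where R: "\<And>D. D \<in> ?A \<Longrightarrow> R D \<subseteq> D \<and> card (R D) = r"
    by metis
  have "(\<Sum>D\<in>?A. q ^ card D) \<le> (\<Sum>(S, E)\<in>?R \<times> Pow X. q ^ card S * q ^ card E)"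
  proof (rule sum_mono_inj_on[where \<phi> = "\<lambda>D. (R D, D - R D)"])
    show "inj_on (\<lambda>D. (R D, D - R D)) ?A"
    proof (rule inj_onI)
      fix D D' assume "D \<in> ?A" "D' \<in> ?A" "(R D, D - R D) = (R D', D' - R D')"
      then show "D = D'" using R[of D] R[of D'] by (metis Diff_partition prod.inject)
    qed
    show "q ^ card D \<le> (\<lambda>(S, E). q ^ card S * q ^ card E) (R D, D - R D)" if "D \<in> ?A" for D
    proof -
      have "finite D" using that assms(1) finite_subset by auto
      then have "card D = card (R D) + card (D - R D)"
        using R[OF that] by (metis card_Diff_subset card_mono finite_subset le_add_diff_inverse)
      then show ?thesis by (simp add: power_add)
    qed
    show "(\<lambda>D. (R D, D - R D)) ` ?A \<subseteq> ?R \<times> Pow X"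
      using R by blast
    show "finite (?R \<times> Pow X)" using assms(1) by simp
    show "0 \<le> (\<lambda>(S, E). q ^ card S * q ^ card E) y" for y
      using assms(2) by (auto split: prod.split)
  qed
  also have "\<dots> = (\<Sum>S\<in>?R. q ^ r * (1 + q) ^ card X)"
    by (simp add: sum.cartesian_product[symmetric] sum_distrib_left[symmetric] sum_power_card_Pow assms(1))
  also have "\<dots> = (card X choose r) * q ^ r * (1 + q) ^ card X"
    using n_subsets[OF assms(1)] by simp
  finally show ?thesis by simp
qed

lemma sum_power_card_large_subsets_le_exp:
  fixes q t :: real
  assumes "finite X" "0 \<le> q" "0 < r" "card X * q \<le> r * t"
  shows "(\<Sum>D | D \<subseteq> X \<and> r \<le> card D. q ^ card D) \<le> (exp 1 * t * exp t) ^ r"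
proof -
  let ?N = "real (card X)"
  have "0 \<le> real r * t" using assms(2,4) by (meson mult_nonneg_nonneg of_nat_0_le_iff order_trans)
  then have t: "0 \<le> t" using assms(3) by (simp add: zero_le_mult_iff)
  have "(card X choose r) * fact r \<le> card X ^ r" by (rule binomial_fact_pow)
  then have "real ((card X choose r) * fact r) \<le> real (card X ^ r)" by (rule of_nat_mono)
  then have "real (card X choose r) * fact r \<le> ?N ^ r" by simp
  then have "real (card X choose r) * fact r * q ^ r \<le> ?N ^ r * q ^ r"
    using assms(2) by (intro mult_right_mono) auto
  then have "(card X choose r) * q ^ r \<le> (?N * q) ^ r / fact r"
    by (simp add: pos_le_divide_eq power_mult_distrib mult_ac)
  also have "\<dots> \<le> (r * t) ^ r / fact r"
    using assms(2,4) by (intro divide_right_mono power_mono) auto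
  also have "\<dots> = t ^ r * (real r ^ r / fact r)"
    by (simp add: power_mult_distrib)
  also have "\<dots> \<le> t ^ r * exp r"
    using t by (intro mult_left_mono power_div_fact_le_exp) auto
  finally have binom: "(card X choose r) * q ^ r \<le> t ^ r * exp r" .
  have "(1 + q) ^ card X \<le> exp q ^ card X"
    using assms(2) by (intro power_mono) (simp_all add: exp_ge_add_one_self add.commute)
  also have "\<dots> = exp (?N * q)" by (simp add: exp_of_nat_mult)
  also have "\<dots> \<le> exp (r * t)" using assms(4) by simp
  finally have "(1 + q) ^ card X \<le> exp (r * t)" .
  then have "(card X choose r) * q ^ r * (1 + q) ^ card X \<le> t ^ r * exp r * exp (r * t)"
    using binom assms(2) t by (intro mult_mono[OF binom]) auto
  also have "\<dots> = (exp 1 * t * exp t) ^ r"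
    by (simp add: power_mult_distrib flip: exp_of_nat_mult)
  finally show ?thesis by (rule order_trans[OF sum_power_card_large_subsets_le[OF assms(1,2)]])
qed

section \<open>Parent-closed sets and peeling\<close>

definition parent_closed :: "nat set \<Rightarrow> (nat \<times> nat) set \<Rightarrow> nat set \<Rightarrow> bool" where
  "parent_closed W G U \<longleftrightarrow> U \<subseteq> W \<and> (\<forall>(y, x)\<in>G. x \<in> U \<longrightarrow> y \<in> W \<longrightarrow> y \<in> U)"

lemma sources_subset: "sources W G \<subseteq> W"
  unfolding sources_def by auto

lemma parent_closed_sources: "parent_closed W G (sources W G)"
  unfolding parent_closed_def sources_def by auto

lemma parent_closed_insert_minimal:
  assumes "parent_closed W G U" "x \<in> W" "\<And>y. (y, x) \<in> G \<Longrightarrow> y \<notin> W - U"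
  shows "parent_closed W G (insert x U)"
  using assms unfolding parent_closed_def by blast

lemma exists_parent_closed_superset:
  assumes "wf G" "finite W" "parent_closed W G U\<^sub>0" "card U\<^sub>0 \<le> u" "u \<le> card W"
  obtains U where "U\<^sub>0 \<subseteq> U" "parent_closed W G U" "card U = u"
proof -
  have "\<exists>U. U\<^sub>0 \<subseteq> U \<and> parent_closed W G U \<and> card U = card U\<^sub>0 + k"
    if "parent_closed W G U\<^sub>0" "card U\<^sub>0 + k \<le> card W" for k U\<^sub>0
    using that
  proof (induction k arbitrary: U\<^sub>0)
    case 0
    then show ?case by auto
  next
    case (Suc k)
    have "U\<^sub>0 \<subseteq> W" using Suc.prems(1) unfolding parent_closed_def by blast
    then have "W - U\<^sub>0 \<noteq> {}" using Suc.prems(2) card_mono[OF assms(2)] by fastforce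
    then obtain x where x: "x \<in> W - U\<^sub>0" "\<And>y. (y, x) \<in> G \<Longrightarrow> y \<notin> W - U\<^sub>0"
      using wfE_min[OF assms(1)] by (metis ex_in_conv)
    have "finite U\<^sub>0" using \<open>U\<^sub>0 \<subseteq> W\<close> assms(2) finite_subset by blast
    then have card_insert: "card (insert x U\<^sub>0) = Suc (card U\<^sub>0)" using x(1) by simp
    have "parent_closed W G (insert x U\<^sub>0)"
      using parent_closed_insert_minimal[OF Suc.prems(1)] x by blast
    moreover have "card (insert x U\<^sub>0) + k \<le> card W" using Suc.prems(2) card_insert by simp
    ultimately obtain U where "insert x U\<^sub>0 \<subseteq> U" "parent_closed W G U" "card U = card (insert x U\<^sub>0) + k"
      using Suc.IH by blast
    then show ?case using card_insert by auto
  qed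
  from this[OF assms(3), of "u - card U\<^sub>0"] show thesis
    using assms(4,5) that by auto
qed

lemma sources_Diff_square:
  assumes "parent_closed W G U" "sources W G \<subseteq> U"
  shows "sources W (G - U \<times> U) = U"
  using assms unfolding parent_closed_def sources_def by blast

lemma card_Diff_sources_le:
  assumes "finite G" "parent_closed W G U"
  shows "card (U - sources W G) \<le> card (Restr G U)"
proof -
  have "U - sources W G \<subseteq> snd ` (G \<inter> U \<times> U)"
    using assms(2) unfolding parent_closed_def sources_def by force
  then have "card (U - sources W G) \<le> card (snd ` (G \<inter> U \<times> U))"
    using assms(1) by (intro card_mono) auto
  also have "\<dots> \<le> card (G \<inter> U \<times> U)"
    using assms(1) by (intro card_image_le) auto
  finally show ?thesis .
qed

lemma peel_parent_closed:
  assumes "finite G" "acyclic G" "finite W" "card (sources W G) \<le> u" "u \<le> card W"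
  obtains U where "parent_closed W G U" "sources W G \<subseteq> U" "card U = u"
    "u - card (sources W G) \<le> card (Restr G U)"
proof -
  obtain U where U: "sources W G \<subseteq> U" "parent_closed W G U" "card U = u"
    using exists_parent_closed_superset[OF finite_acyclic_wf[OF assms(1,2)] assms(3)
        parent_closed_sources assms(4,5)] .
  have "finite U" using U(2) assms(3) finite_subset unfolding parent_closed_def by blast
  then have "card (U - sources W G) = u - card (sources W G)"
    using U(1,3) card_Diff_subset[OF finite_subset[OF U(1)]] by simp
  with card_Diff_sources_le[OF assms(1) U(2)] show thesis
    using that[OF U(2,1,3)] by simp
qed

lemma sources_Un_eq:
  assumes "\<And>a b. (a, b) \<in> F \<Longrightarrow> a \<notin> W"
  shows "sources W (E \<union> F) = sources W E"
  using assms unfolding sources_def by blast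

lemma acyclic_Un_from_sources:
  assumes "acyclic R" "\<And>a b c. (a, b) \<in> Z \<Longrightarrow> (c, a) \<notin> R \<union> Z"
  shows "acyclic (R \<union> Z)"
proof -
  have "(a, b) \<in> R\<^sup>+" if "(a, b) \<in> (R \<union> Z)\<^sup>+" "(c, a) \<in> R \<union> Z" for a b c
    using that
  proof (induction rule: trancl_induct)
    case (base y)
    then show ?case using assms(2) by blast
  next
    case (step y z)
    have "(y, z) \<notin> Z" using assms(2) tranclD2[OF step.hyps(1)] by blast
    then show ?case using step by (blast intro: trancl_into_trancl)
  qed
  then show ?thesis
    using assms(1) unfolding acyclic_def by (meson tranclD2)
qed

section \<open>The weight of an event under D(n,p)\<close>

lemma finite_dags: "finite (dags n)"
  by (rule finite_subset[of _ "Pow ({1..n} \<times> {1..n})"]) (auto simp: dags_def)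

lemma dagsD:
  assumes "G \<in> dags n"
  shows "G \<subseteq> {1..n} \<times> {1..n}" "acyclic G" "finite G"
  using assms finite_subset[of G "{1..n} \<times> {1..n}"] by (auto simp: dags_def)

lemma Diff_in_dags: "G \<in> dags n \<Longrightarrow> G - E \<in> dags n"
  unfolding dags_def by (auto intro: acyclic_subset)

lemma H1_subset: "H1 n G \<subseteq> {1..n}"
  unfolding H1_def by (rule sources_subset)

lemma H2_subset: "H2 n G \<subseteq> {1..n} - H1 n G"
  unfolding H2_def by (rule sources_subset)

lemma finite_H1 [simp]: "finite (H1 n G)"
  using H1_subset finite_subset by blast

lemma finite_H2 [simp]: "finite (H2 n G)"
  using H2_subset finite_subset by blast

definition dag_mass :: "nat \<Rightarrow> real \<Rightarrow> ((nat \<times> nat) set \<Rightarrow> bool) \<Rightarrow> real" where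
  "dag_mass n q P = (\<Sum>G\<in>{G \<in> dags n. P G}. q ^ card G)"

lemma dag_mass_nonneg: "0 \<le> q \<Longrightarrow> 0 \<le> dag_mass n q P"
  unfolding dag_mass_def by (intro sum_nonneg) auto

lemma dag_mass_mono:
  assumes "0 \<le> q" "\<And>G. G \<in> dags n \<Longrightarrow> P G \<Longrightarrow> Q G"
  shows "dag_mass n q P \<le> dag_mass n q Q"
  unfolding dag_mass_def using assms finite_dags by (intro sum_mono2) auto

lemma dag_mass_disj_le:
  assumes "0 \<le> q"
  shows "dag_mass n q (\<lambda>G. P G \<or> Q G) \<le> dag_mass n q P + dag_mass n q Q"
proof -
  let ?P = "{G \<in> dags n. P G}" and ?Q = "{G \<in> dags n. Q G}"
  have eq: "{G \<in> dags n. P G \<or> Q G} = ?P \<union> ?Q" by blast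
  have "(\<Sum>G\<in>?P \<union> ?Q. q ^ card G)
      = (\<Sum>G\<in>?P. q ^ card G) + (\<Sum>G\<in>?Q. q ^ card G) - (\<Sum>G\<in>?P \<inter> ?Q. q ^ card G)"
    using finite_dags by (intro sum_Un) auto
  moreover have "0 \<le> (\<Sum>G\<in>?P \<inter> ?Q. q ^ card G)"
    using assms by (intro sum_nonneg) auto
  ultimately show ?thesis unfolding dag_mass_def eq by linarith
qed

lemma dag_mass_True_ge:
  fixes q :: real
  assumes "0 \<le> q"
  shows "(1 + q) ^ (n div 2 * (n - n div 2)) \<le> dag_mass n q (\<lambda>_. True)"
proof -
  let ?a = "n div 2"
  let ?X = "{1..?a} \<times> {?a+1..n}"
  have "acyclic ?X"
    by (rule acyclicI_order[where f = "\<lambda>x. - int x"]) auto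
  then have "Pow ?X \<subseteq> dags n"
    unfolding dags_def by (auto intro: acyclic_subset)
  then have "(\<Sum>E\<in>Pow ?X. q ^ card E) \<le> dag_mass n q (\<lambda>_. True)"
    unfolding dag_mass_def using assms finite_dags by (intro sum_mono2) auto
  then show ?thesis by (simp add: sum_power_card_Pow card_cartesian_product)
qed

lemma dag_mass_True_pos:
  assumes "0 \<le> q"
  shows "0 < dag_mass n q (\<lambda>_. True)"
proof -
  have "1 \<le> (1 + q) ^ (n div 2 * (n - n div 2))" using assms by (simp add: one_le_power)
  then show ?thesis using dag_mass_True_ge[OF assms, of n] by linarith
qed

lemma dag_prob_eq:
  "dag_prob n p P = dag_mass n (p / (1 - p)) P / dag_mass n (p / (1 - p)) (\<lambda>_. True)"
  unfolding dag_prob_def dag_mass_def dag_weight_def by simp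

lemma one_minus_dag_prob:
  assumes "0 \<le> p" "p < 1"
  shows "1 - dag_prob n p P
    = dag_mass n (p / (1 - p)) (\<lambda>G. \<not> P G) / dag_mass n (p / (1 - p)) (\<lambda>_. True)"
proof -
  let ?q = "p / (1 - p)"
  have "dag_mass n ?q (\<lambda>_. True) = dag_mass n ?q P + dag_mass n ?q (\<lambda>G. \<not> P G)"
    unfolding dag_mass_def using finite_dags
    by (subst sum.union_disjoint[symmetric]) (auto intro: sum.cong)
  moreover have "0 < dag_mass n ?q (\<lambda>_. True)" using assms by (intro dag_mass_True_pos) simp
  ultimately show ?thesis unfolding dag_prob_eq by (simp add: field_simps)
qed

lemma dag_prob_le_1:
  assumes "0 \<le> p" "p < 1"
  shows "dag_prob n p P \<le> 1"
proof -
  have "0 \<le> p / (1 - p)" using assms by simp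
  then have "0 \<le> dag_mass n (p / (1 - p)) (\<lambda>G. \<not> P G)" "0 \<le> dag_mass n (p / (1 - p)) (\<lambda>_. True)"
    by (simp_all add: dag_mass_nonneg)
  then have "0 \<le> 1 - dag_prob n p P" unfolding one_minus_dag_prob[OF assms] by simp
  then show ?thesis by simp
qed

lemma dag_mass_small_levels_le:
  fixes q M\<^sub>1 M\<^sub>2 :: real
  assumes "0 \<le> q"
  shows "dag_mass n q (\<lambda>G. \<not> (M\<^sub>1 \<le> real (h1 n G) \<and> M\<^sub>2 \<le> real (h2 n G)))
    \<le> dag_mass n q (\<lambda>G. real (h1 n G) < M\<^sub>1)
      + dag_mass n q (\<lambda>G. M\<^sub>1 \<le> h1 n G \<and> h1 n G + u \<le> n \<and> real (h2 n G) < M\<^sub>2)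
      + dag_mass n q (\<lambda>G. n < h1 n G + u)"
proof -
  let ?E\<^sub>1 = "\<lambda>G. real (h1 n G) < M\<^sub>1"
  let ?E\<^sub>2 = "\<lambda>G. M\<^sub>1 \<le> h1 n G \<and> h1 n G + u \<le> n \<and> real (h2 n G) < M\<^sub>2"
  let ?E\<^sub>3 = "\<lambda>G. n < h1 n G + u"
  have "(?E\<^sub>1 G \<or> ?E\<^sub>2 G) \<or> ?E\<^sub>3 G" if "\<not> (M\<^sub>1 \<le> real (h1 n G) \<and> M\<^sub>2 \<le> real (h2 n G))" for G
  proof (cases "?E\<^sub>1 G")
    case False
    then have "real (h2 n G) < M\<^sub>2" using that by auto
    with False show ?thesis by (cases "h1 n G + u \<le> n") auto
  qed simp
  then have "dag_mass n q (\<lambda>G. \<not> (M\<^sub>1 \<le> real (h1 n G) \<and> M\<^sub>2 \<le> real (h2 n G)))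
      \<le> dag_mass n q (\<lambda>G. (?E\<^sub>1 G \<or> ?E\<^sub>2 G) \<or> ?E\<^sub>3 G)"
    by (intro dag_mass_mono[OF assms]) blast
  also have "\<dots> \<le> dag_mass n q (\<lambda>G. ?E\<^sub>1 G \<or> ?E\<^sub>2 G) + dag_mass n q ?E\<^sub>3"
    using assms by (rule dag_mass_disj_le)
  also have "\<dots> \<le> dag_mass n q ?E\<^sub>1 + dag_mass n q ?E\<^sub>2 + dag_mass n q ?E\<^sub>3"
    using dag_mass_disj_le[OF assms] by simp
  finally show ?thesis .
qed

lemma sum_dags_times_large_subsets_le:
  fixes q t :: real
  assumes "0 \<le> q" "0 < r" "real (u * u) * q \<le> r * t" "\<And>G. F G \<subseteq> {1..n}"
  shows "(\<Sum>(G, D)\<in>Sigma {G \<in> dags n. card (F G) = u} (\<lambda>G. {D. D \<subseteq> F G \<times> F G \<and> r \<le> card D}).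
            q ^ card G * q ^ card D)
         \<le> dag_mass n q (\<lambda>_. True) * (exp 1 * t * exp t) ^ r"
proof -
  have fin: "finite (F G \<times> F G)" for G using assms(4) finite_subset by blast
  have "0 \<le> real r * t" using assms(1,3) by (meson mult_nonneg_nonneg of_nat_0_le_iff order_trans)
  then have t: "0 \<le> t" using assms(2) by (simp add: zero_le_mult_iff)
  have "(\<Sum>(G, D)\<in>Sigma {G \<in> dags n. card (F G) = u} (\<lambda>G. {D. D \<subseteq> F G \<times> F G \<and> r \<le> card D}).
            q ^ card G * q ^ card D)
      = (\<Sum>G\<in>{G \<in> dags n. card (F G) = u}. q ^ card G * (\<Sum>D | D \<subseteq> F G \<times> F G \<and> r \<le> card D. q ^ card D))"
    using finite_dags fin by (subst sum.Sigma[symmetric]) (auto simp: sum_distrib_left)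
  also have "\<dots> \<le> (\<Sum>G\<in>{G \<in> dags n. card (F G) = u}. q ^ card G * (exp 1 * t * exp t) ^ r)"
  proof (intro sum_mono mult_left_mono)
    fix G assume "G \<in> {G \<in> dags n. card (F G) = u}"
    then show "(\<Sum>D | D \<subseteq> F G \<times> F G \<and> r \<le> card D. q ^ card D) \<le> (exp 1 * t * exp t) ^ r"
      using assms(1-3) by (intro sum_power_card_large_subsets_le_exp[OF fin]) (auto simp: card_cartesian_product)
  qed (use assms(1) in simp)
  also have "\<dots> \<le> dag_mass n q (\<lambda>_. True) * (exp 1 * t * exp t) ^ r"
    unfolding sum_distrib_right[symmetric] dag_mass_def[symmetric]
    using assms(1) t by (intro mult_right_mono dag_mass_mono) auto
  finally show ?thesis .
qed

lemma dag_mass_few_sources_le: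
  fixes q t :: real
  assumes "0 \<le> q" "m < u" "u \<le> n" "real (u * u) * q \<le> real (u - m) * t"
  shows "dag_mass n q (\<lambda>G. h1 n G \<le> m) \<le> dag_mass n q (\<lambda>_. True) * (exp 1 * t * exp t) ^ (u - m)"
proof -
  let ?V = "{1..n}"
  let ?B = "Sigma {G \<in> dags n. card (H1 n G) = u} (\<lambda>G. {D. D \<subseteq> H1 n G \<times> H1 n G \<and> u - m \<le> card D})"
  have "\<exists>U. parent_closed ?V G U \<and> H1 n G \<subseteq> U \<and> card U = u \<and> u - m \<le> card (Restr G U)"
    if "G \<in> dags n" "h1 n G \<le> m" for G
  proof -
    note G = dagsD[OF that(1)]
    have "card (sources ?V G) \<le> u" using that(2) assms(2) by (simp add: h1_def H1_def)
    moreover have "u \<le> card ?V" using assms(3) by simp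
    ultimately obtain U where "parent_closed ?V G U" "sources ?V G \<subseteq> U" "card U = u"
      "u - card (sources ?V G) \<le> card (Restr G U)"
      by (rule peel_parent_closed[OF G(3,2) finite_atLeastAtMost])
    moreover have "u - m \<le> u - card (sources ?V G)" using that(2) by (simp add: h1_def H1_def)
    ultimately show ?thesis unfolding H1_def by (intro exI[of _ U]) auto
  qed
  then obtain U where U: "\<And>G. G \<in> dags n \<Longrightarrow> h1 n G \<le> m \<Longrightarrow>
      parent_closed ?V G (U G) \<and> H1 n G \<subseteq> U G \<and> card (U G) = u \<and> u - m \<le> card (Restr G (U G))"
    by metis
  have "dag_mass n q (\<lambda>G. h1 n G \<le> m) \<le> (\<Sum>(G, D)\<in>?B. q ^ card G * q ^ card D)"
    unfolding dag_mass_def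
  proof (rule sum_mono_inj_on[where \<phi> = "\<lambda>G. (G - U G \<times> U G, Restr G (U G))"])
    show "inj_on (\<lambda>G. (G - U G \<times> U G, Restr G (U G))) {G \<in> dags n. h1 n G \<le> m}"
      by (rule inj_onI) (metis Int_Diff_Un prod.inject)
    show "(\<lambda>G. (G - U G \<times> U G, Restr G (U G))) ` {G \<in> dags n. h1 n G \<le> m} \<subseteq> ?B"
    proof (rule image_subsetI)
      fix G assume "G \<in> {G \<in> dags n. h1 n G \<le> m}"
      then have G: "G \<in> dags n" "h1 n G \<le> m" by auto
      have "H1 n (G - U G \<times> U G) = U G"
        unfolding H1_def using U[OF G] by (intro sources_Diff_square) (auto simp: H1_def)
      then show "(G - U G \<times> U G, Restr G (U G)) \<in> ?B"
        using U[OF G] Diff_in_dags[OF G(1)] by auto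
    qed
    show "q ^ card G \<le> (\<lambda>(G', D). q ^ card G' * q ^ card D) (G - U G \<times> U G, Restr G (U G))"
      if "G \<in> {G \<in> dags n. h1 n G \<le> m}" for G
      using card_Int_Diff[OF dagsD(3), of G n "U G \<times> U G"] that by (simp add: power_add)
    show "finite ?B"
      using finite_dags by (intro finite_SigmaI) (auto simp: finite_Collect_subsets finite_Collect_conjI)
  qed (use assms(1) in auto)
  also have "\<dots> \<le> dag_mass n q (\<lambda>_. True) * (exp 1 * t * exp t) ^ (u - m)"
    using assms by (intro sum_dags_times_large_subsets_le H1_subset) auto
  finally show ?thesis .
qed

lemma card_small_subsets_le:
  assumes "finite A" "A \<noteq> {}"
  shows "card {T. T \<subseteq> A \<and> card T < u} \<le> u * card A ^ u"
proof -
  have "{T. T \<subseteq> A \<and> card T < u} = (\<Union>s<u. {T. T \<subseteq> A \<and> card T = s})" by auto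
  then have "card {T. T \<subseteq> A \<and> card T < u} \<le> (\<Sum>s<u. card {T. T \<subseteq> A \<and> card T = s})"
    by (simp add: card_UN_le)
  also have "\<dots> = (\<Sum>s<u. card A choose s)" using n_subsets[OF assms(1)] by simp
  also have "\<dots> \<le> (\<Sum>s<u. card A ^ u)"
  proof (rule sum_mono)
    fix s assume "s \<in> {..<u}"
    have "card A choose s \<le> (card A choose s) * fact s" by simp
    also have "\<dots> \<le> card A ^ s" by (rule binomial_fact_pow)
    also have "\<dots> \<le> card A ^ u"
      using \<open>s \<in> {..<u}\<close> assms by (intro power_increasing) (auto simp: Suc_leI card_gt_0_iff)
    finally show "card A choose s \<le> card A ^ u" .
  qed
  finally show ?thesis by simp
qed

lemma dag_mass_many_sources_le:
  fixes q :: real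
  assumes "0 \<le> q" "1 \<le> n"
  shows "dag_mass n q (\<lambda>G. n < h1 n G + u) \<le> real u * real n ^ u * (1 + q) ^ (n * u)"
proof -
  let ?V = "{1..n}"
  let ?T = "{T. T \<subseteq> ?V \<and> card T < u}"
  have "dag_mass n q (\<lambda>G. n < h1 n G + u) \<le> (\<Sum>(T, G)\<in>Sigma ?T (\<lambda>T. Pow (?V \<times> T)). q ^ card G)"
    unfolding dag_mass_def
  proof (rule sum_mono_inj_on[where \<phi> = "\<lambda>G. (?V - H1 n G, G)"])
    show "(\<lambda>G. (?V - H1 n G, G)) ` {G \<in> dags n. n < h1 n G + u} \<subseteq> Sigma ?T (\<lambda>T. Pow (?V \<times> T))"
    proof (rule image_subsetI)
      fix G assume "G \<in> {G \<in> dags n. n < h1 n G + u}"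
      then have G: "G \<in> dags n" "n < h1 n G + u" by auto
      have "card (?V - H1 n G) = n - h1 n G" "h1 n G \<le> n"
        using card_Diff_subset[OF finite_subset[OF H1_subset] H1_subset] card_mono[OF _ H1_subset]
        by (simp_all add: h1_def)
      moreover have "G \<subseteq> ?V \<times> (?V - H1 n G)"
        using dagsD(1)[OF G(1)] unfolding H1_def sources_def by auto
      ultimately show "(?V - H1 n G, G) \<in> Sigma ?T (\<lambda>T. Pow (?V \<times> T))" using G(2) by auto
    qed
    show "finite (Sigma ?T (\<lambda>T. Pow (?V \<times> T)))"
      by (intro finite_SigmaI) (auto intro: finite_subset)
  qed (use assms(1) in \<open>auto intro: inj_onI\<close>)
  also have "\<dots> = (\<Sum>T\<in>?T. (1 + q) ^ (n * card T))"
    by (subst sum.Sigma[symmetric])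
       (auto intro!: sum.cong simp: sum_power_card_Pow card_cartesian_product finite_subset)
  also have "\<dots> \<le> (\<Sum>T\<in>?T. (1 + q) ^ (n * u))"
    using assms(1) by (intro sum_mono power_increasing) auto
  also have "\<dots> \<le> real u * real n ^ u * (1 + q) ^ (n * u)"
  proof -
    have "card ?T \<le> u * n ^ u" using card_small_subsets_le[of ?V u] assms(2) by simp
    then have "real (card ?T) \<le> real u * real n ^ u" by (metis of_nat_le_iff of_nat_mult of_nat_power)
    then show ?thesis using assms(1) by (simp add: mult_right_mono)
  qed
  finally show ?thesis .
qed

section \<open>Rewiring below the first level\<close>

definition orphans :: "nat set \<Rightarrow> (nat \<times> nat) set \<Rightarrow> nat set \<Rightarrow> nat set" where
  "orphans S G U = {x \<in> U. \<forall>s\<in>S. (s, x) \<notin> G}"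

(* Deleting the edges inside U would turn the orphans of U (no parent in S) into sources;
   rewire re-attaches each orphan x to the source f x instead. *)
definition rewire :: "nat set \<Rightarrow> (nat \<times> nat) set \<Rightarrow> nat set \<Rightarrow> (nat \<Rightarrow> nat) \<Rightarrow> (nat \<times> nat) set" where
  "rewire S G U f = (G - U \<times> U) \<union> (\<lambda>x. (f x, x)) ` orphans S G U"

locale tower_rewiring =
  fixes V :: "nat set" and G :: "(nat \<times> nat) set" and U :: "nat set" and f :: "nat \<Rightarrow> nat"
  assumes finite_V: "finite V"
    and G_subset: "G \<subseteq> V \<times> V"
    and U_closed: "parent_closed (V - sources V G) G U"
    and U_supset: "sources (V - sources V G) G \<subseteq> U"
    and f_maps: "\<And>x. x \<in> orphans (sources V G) G U \<Longrightarrow> f x \<in> sources V G"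
begin

abbreviation "S \<equiv> sources V G"
abbreviation "Orph \<equiv> orphans S G U"
abbreviation "G' \<equiv> rewire S G U f"

lemma U_subset: "U \<subseteq> V - S"
  using U_closed unfolding parent_closed_def by blast

lemma orphans_subset: "Orph \<subseteq> U"
  unfolding orphans_def by blast

lemma new_edges_subset: "(\<lambda>x. (f x, x)) ` Orph \<subseteq> S \<times> Orph"
  using f_maps by blast

lemma first_level: "sources V G' = S"
proof (intro equalityI subsetI)
  fix v assume v: "v \<in> sources V G'"
  show "v \<in> S"
  proof (rule ccontr)
    assume "v \<notin> S"
    then obtain y where y: "y \<in> V" "(y, v) \<in> G"
      using v unfolding sources_def by blast
    have "v \<notin> Orph"
      using v f_maps sources_subset unfolding rewire_def sources_def by blast
    then obtain y' where "y' \<in> V" "(y', v) \<in> G - U \<times> U"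
      using y U_subset sources_subset unfolding orphans_def by blast
    then show False using v unfolding rewire_def sources_def by blast
  qed
next
  fix s assume "s \<in> S"
  then show "s \<in> sources V G'"
    using U_subset orphans_subset unfolding rewire_def sources_def by blast
qed

lemma second_level: "sources (V - S) G' = U"
proof -
  have "sources (V - S) G' = sources (V - S) (G - U \<times> U)"
    unfolding rewire_def using new_edges_subset by (intro sources_Un_eq) blast
  also have "\<dots> = U" using U_closed U_supset by (rule sources_Diff_square)
  finally show ?thesis .
qed

lemma acyclic_rewire: "acyclic G \<Longrightarrow> acyclic G'"
  unfolding rewire_def
proof (rule acyclic_Un_from_sources)
  show "acyclic (G - U \<times> U)" if "acyclic G" using that by (rule acyclic_subset) blast
  fix a b c assume "(a, b) \<in> (\<lambda>x. (f x, x)) ` Orph"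
  then have "a \<in> S" using new_edges_subset by blast
  then show "(c, a) \<notin> (G - U \<times> U) \<union> (\<lambda>x. (f x, x)) ` Orph"
    using G_subset U_subset orphans_subset unfolding sources_def by blast
qed

lemma rewire_subset: "G' \<subseteq> V \<times> V"
  using G_subset new_edges_subset sources_subset U_subset orphans_subset unfolding rewire_def by blast

lemma card_rewire: "card G + card Orph = card G' + card (Restr G U)"
proof -
  have fin: "finite G" "finite Orph"
    using finite_subset[OF G_subset] finite_subset[OF _ finite_V] U_subset orphans_subset finite_V
    by auto
  have "(G - U \<times> U) \<inter> (\<lambda>x. (f x, x)) ` Orph = {}"
    using new_edges_subset unfolding orphans_def by blast
  moreover have "card ((\<lambda>x. (f x, x)) ` Orph) = card Orph"
    by (intro card_image inj_onI) auto
  ultimately have "card G' = card (G - U \<times> U) + card Orph"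
    unfolding rewire_def using fin by (simp add: card_Un_disjoint)
  then show ?thesis using card_Int_Diff[OF fin(1), of "U \<times> U"] by simp
qed

lemma rewire_recovers_graph: "G = (G' - S \<times> Orph) \<union> Restr G U"
  using new_edges_subset unfolding rewire_def orphans_def by blast

lemma rewire_recovers_map:
  assumes "x \<in> Orph" "s \<in> S"
  shows "(s, x) \<in> G' \<longleftrightarrow> s = f x"
  using assms orphans_subset unfolding rewire_def orphans_def by blast

end

lemma sum_mult_power_le_sum_PiE:
  fixes w :: "'a \<Rightarrow> real" and c q :: real
  assumes "finite A" "\<And>x. x \<in> A \<Longrightarrow> 0 \<le> w x"
    and "\<And>x. x \<in> A \<Longrightarrow> finite (I x) \<and> card (I x) \<le> u" "\<And>x. x \<in> A \<Longrightarrow> finite (J x)"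
    and "0 \<le> c" "c \<le> 1" "\<And>x. x \<in> A \<Longrightarrow> c \<le> card (J x) * q"
  shows "(\<Sum>x\<in>A. w x) * c ^ u \<le> (\<Sum>(x, g)\<in>Sigma A (\<lambda>x. I x \<rightarrow>\<^sub>E J x). w x * q ^ card (I x))"
proof -
  have "c ^ u \<le> (card (J x) * q) ^ card (I x)" if x: "x \<in> A" for x
  proof -
    have "c ^ u \<le> c ^ card (I x)" using assms(3)[OF x] assms(5,6) by (intro power_decreasing) auto
    also have "\<dots> \<le> (card (J x) * q) ^ card (I x)" using assms(5) assms(7)[OF x] by (intro power_mono) auto
    finally show ?thesis .
  qed
  then have "(\<Sum>x\<in>A. w x) * c ^ u \<le> (\<Sum>x\<in>A. w x * (card (J x) * q) ^ card (I x))"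
    unfolding sum_distrib_right using assms(2) by (intro sum_mono mult_left_mono) auto
  also have "\<dots> = (\<Sum>x\<in>A. \<Sum>g\<in>I x \<rightarrow>\<^sub>E J x. w x * q ^ card (I x))"
    using assms(3,4) by (intro sum.cong) (auto simp: card_PiE power_mult_distrib)
  also have "\<dots> = (\<Sum>(x, g)\<in>Sigma A (\<lambda>x. I x \<rightarrow>\<^sub>E J x). w x * q ^ card (I x))"
    using assms(1,3,4) by (intro sum.Sigma) (auto simp: finite_PiE)
  finally show ?thesis .
qed

lemma peel_second_level:
  assumes "G \<in> dags n" "h2 n G \<le> m" "m \<le> u" "h1 n G + u \<le> n"
  obtains U where "parent_closed ({1..n} - H1 n G) G U" "H2 n G \<subseteq> U" "card U = u"
    "u - m \<le> card (Restr G U)"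
proof -
  note G = dagsD[OF assms(1)]
  have src_le: "card (sources ({1..n} - H1 n G) G) \<le> u" using assms(2,3) by (simp add: h2_def H2_def)
  have "card ({1..n} - H1 n G) = n - h1 n G"
    using card_Diff_subset[OF finite_H1 H1_subset] by (simp add: h1_def)
  then have u_le: "u \<le> card ({1..n} - H1 n G)" using assms(4) by simp
  obtain U where "parent_closed ({1..n} - H1 n G) G U" "H2 n G \<subseteq> U" "card U = u"
    "u - h2 n G \<le> card (Restr G U)"
    unfolding h2_def H2_def
    by (rule peel_parent_closed[OF G(3,2) finite_Diff[OF finite_atLeastAtMost] src_le u_le])
  moreover have "u - m \<le> u - h2 n G" using assms(2) by simp
  ultimately show thesis using that by simp
qed

lemma rewire_dags:
  assumes "G \<in> dags n" "tower_rewiring {1..n} G U f"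
  defines "G' \<equiv> rewire (H1 n G) G U f"
  shows "G' \<in> dags n" "H2 n G' = U" "orphans (H1 n G) G U \<subseteq> U"
    "card G + card (orphans (H1 n G) G U) = card G' + card (Restr G U)"
proof -
  interpret tower_rewiring "{1..n}" G U f by (rule assms(2))
  show "G' \<in> dags n"
    using rewire_subset acyclic_rewire dagsD(2)[OF assms(1)] by (simp add: G'_def dags_def H1_def)
  show "H2 n G' = U" using first_level second_level by (simp add: G'_def H1_def H2_def)
  show "orphans (H1 n G) G U \<subseteq> U"
    "card G + card (orphans (H1 n G) G U) = card G' + card (Restr G U)"
    using orphans_subset card_rewire by (simp_all add: G'_def H1_def)
qed

lemma rewire_inj:
  assumes R\<^sub>1: "tower_rewiring V G\<^sub>1 U\<^sub>1 f\<^sub>1" "f\<^sub>1 \<in> orphans (sources V G\<^sub>1) G\<^sub>1 U\<^sub>1 \<rightarrow>\<^sub>E sources V G\<^sub>1"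
    and R\<^sub>2: "tower_rewiring V G\<^sub>2 U\<^sub>2 f\<^sub>2" "f\<^sub>2 \<in> orphans (sources V G\<^sub>2) G\<^sub>2 U\<^sub>2 \<rightarrow>\<^sub>E sources V G\<^sub>2"
    and eq: "rewire (sources V G\<^sub>1) G\<^sub>1 U\<^sub>1 f\<^sub>1 = rewire (sources V G\<^sub>2) G\<^sub>2 U\<^sub>2 f\<^sub>2"
      "Restr G\<^sub>1 U\<^sub>1 = Restr G\<^sub>2 U\<^sub>2" "orphans (sources V G\<^sub>1) G\<^sub>1 U\<^sub>1 = orphans (sources V G\<^sub>2) G\<^sub>2 U\<^sub>2"
  shows "G\<^sub>1 = G\<^sub>2 \<and> f\<^sub>1 = f\<^sub>2"
proof -
  interpret R\<^sub>1: tower_rewiring V G\<^sub>1 U\<^sub>1 f\<^sub>1 by (rule R\<^sub>1(1))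
  interpret R\<^sub>2: tower_rewiring V G\<^sub>2 U\<^sub>2 f\<^sub>2 by (rule R\<^sub>2(1))
  have S: "R\<^sub>1.S = R\<^sub>2.S" using R\<^sub>1.first_level R\<^sub>2.first_level eq(1) by simp
  have "G\<^sub>1 = (R\<^sub>1.G' - R\<^sub>1.S \<times> R\<^sub>1.Orph) \<union> Restr G\<^sub>1 U\<^sub>1" by (rule R\<^sub>1.rewire_recovers_graph)
  also have "\<dots> = (R\<^sub>2.G' - R\<^sub>2.S \<times> R\<^sub>2.Orph) \<union> Restr G\<^sub>2 U\<^sub>2" using eq S by simp
  also have "\<dots> = G\<^sub>2" by (rule R\<^sub>2.rewire_recovers_graph[symmetric])
  finally have G: "G\<^sub>1 = G\<^sub>2" .
  have "f\<^sub>1 = f\<^sub>2"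
  proof (rule PiE_ext[OF R\<^sub>1(2)])
    show "f\<^sub>2 \<in> R\<^sub>1.Orph \<rightarrow>\<^sub>E R\<^sub>1.S" using R\<^sub>2(2) eq(3) S by simp
    fix x assume x: "x \<in> R\<^sub>1.Orph"
    then have "f\<^sub>1 x \<in> R\<^sub>1.S" using R\<^sub>1(2) by auto
    then have "(f\<^sub>1 x, x) \<in> R\<^sub>2.G'" using R\<^sub>1.rewire_recovers_map[OF x] eq(1) by simp
    moreover have "x \<in> R\<^sub>2.Orph" "f\<^sub>1 x \<in> R\<^sub>2.S" using x \<open>f\<^sub>1 x \<in> R\<^sub>1.S\<close> eq(3) S by simp_all
    ultimately show "f\<^sub>1 x = f\<^sub>2 x" using R\<^sub>2.rewire_recovers_map by simp
  qed
  with G show ?thesis by simp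
qed

lemma sum_rewired_le:
  fixes q t :: real
  assumes q: "0 \<le> q" and r: "0 < r" "real (u * u) * q \<le> real r * t" and A: "A \<subseteq> dags n"
    and U: "\<And>G. G \<in> A \<Longrightarrow> parent_closed ({1..n} - H1 n G) G (U G) \<and> H2 n G \<subseteq> U G
      \<and> card (U G) = u \<and> r \<le> card (Restr G (U G))"
  defines "Orph G \<equiv> orphans (H1 n G) G (U G)"
  shows "(\<Sum>(G, g)\<in>Sigma A (\<lambda>G. Orph G \<rightarrow>\<^sub>E H1 n G). q ^ card G * q ^ card (Orph G))
    \<le> 2 ^ u * dag_mass n q (\<lambda>_. True) * (exp 1 * t * exp t) ^ r"
proof -
  let ?C = "Sigma A (\<lambda>G. Orph G \<rightarrow>\<^sub>E H1 n G)"
  let ?B = "Sigma {G \<in> dags n. card (H2 n G) = u} (\<lambda>G. {D. D \<subseteq> H2 n G \<times> H2 n G \<and> r \<le> card D})"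
  define \<psi> where "\<psi> = (\<lambda>(G, g). ((rewire (H1 n G) G (U G) g, Restr G (U G)), Orph G))"
  have rewiring: "tower_rewiring {1..n} G (U G) g" if "G \<in> A" "g \<in> Orph G \<rightarrow>\<^sub>E H1 n G" for G g
    using that U[OF that(1)] A dagsD[of G n] by unfold_locales (auto simp: Orph_def H1_def H2_def)
  have "(\<Sum>(G, g)\<in>?C. q ^ card G * q ^ card (Orph G))
      \<le> (\<Sum>((G', D), X)\<in>Sigma ?B (\<lambda>(G', D). Pow (H2 n G')). q ^ card G' * q ^ card D)"
  proof (rule sum_mono_inj_on[where \<phi> = \<psi>])
    show "\<psi> ` ?C \<subseteq> Sigma ?B (\<lambda>(G', D). Pow (H2 n G'))"
    proof (rule image_subsetI)
      fix Gg assume "Gg \<in> ?C"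
      then obtain G g where Gg: "Gg = (G, g)" and G: "G \<in> A" "g \<in> Orph G \<rightarrow>\<^sub>E H1 n G" by blast
      have "G \<in> dags n" using A G(1) by blast
      then show "\<psi> Gg \<in> Sigma ?B (\<lambda>(G', D). Pow (H2 n G'))"
        using rewire_dags[OF _ rewiring[OF G]] U[OF G(1)] unfolding Gg \<psi>_def Orph_def by auto
    qed
    show "inj_on \<psi> ?C"
    proof (rule inj_onI)
      fix a b assume "a \<in> ?C" "b \<in> ?C" and eq: "\<psi> a = \<psi> b"
      then obtain G\<^sub>1 g\<^sub>1 G\<^sub>2 g\<^sub>2 where ab: "a = (G\<^sub>1, g\<^sub>1)" "b = (G\<^sub>2, g\<^sub>2)"
        and G\<^sub>1: "G\<^sub>1 \<in> A" "g\<^sub>1 \<in> Orph G\<^sub>1 \<rightarrow>\<^sub>E H1 n G\<^sub>1"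
        and G\<^sub>2: "G\<^sub>2 \<in> A" "g\<^sub>2 \<in> Orph G\<^sub>2 \<rightarrow>\<^sub>E H1 n G\<^sub>2"
        by blast
      have "rewire (H1 n G\<^sub>1) G\<^sub>1 (U G\<^sub>1) g\<^sub>1 = rewire (H1 n G\<^sub>2) G\<^sub>2 (U G\<^sub>2) g\<^sub>2"
        "Restr G\<^sub>1 (U G\<^sub>1) = Restr G\<^sub>2 (U G\<^sub>2)" "Orph G\<^sub>1 = Orph G\<^sub>2"
        using eq unfolding ab \<psi>_def by simp_all
      then have "G\<^sub>1 = G\<^sub>2 \<and> g\<^sub>1 = g\<^sub>2"
        using G\<^sub>1(2) G\<^sub>2(2) unfolding Orph_def H1_def
        by (intro rewire_inj[OF rewiring[OF G\<^sub>1] _ rewiring[OF G\<^sub>2]])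
      then show "a = b" unfolding ab by simp
    qed
    show "(\<lambda>(G, g). q ^ card G * q ^ card (Orph G)) Gg
        \<le> (\<lambda>((G', D), X). q ^ card G' * q ^ card D) (\<psi> Gg)"
      if mem: "Gg \<in> ?C" for Gg
    proof -
      obtain G g where Gg: "Gg = (G, g)" and G: "G \<in> A" "g \<in> Orph G \<rightarrow>\<^sub>E H1 n G"
        using mem by blast
      have "G \<in> dags n" using A G(1) by blast
      then show ?thesis
        using rewire_dags(4)[OF _ rewiring[OF G]] unfolding Gg \<psi>_def Orph_def by (simp flip: power_add)
    qed
    show "finite (Sigma ?B (\<lambda>(G', D). Pow (H2 n G')))"
      using finite_dags by (intro finite_SigmaI) (auto simp: finite_Collect_subsets finite_Collect_conjI)
  qed (use q in auto)
  also have "\<dots> = 2 ^ u * (\<Sum>(G', D)\<in>?B. q ^ card G' * q ^ card D)"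
    using finite_dags
    by (subst sum.Sigma[symmetric])
       (auto simp: sum_distrib_left card_Pow finite_Collect_subsets finite_Collect_conjI intro!: sum.cong)
  also have "\<dots> \<le> 2 ^ u * (dag_mass n q (\<lambda>_. True) * (exp 1 * t * exp t) ^ r)"
    using q r H2_subset[of n] by (intro mult_left_mono sum_dags_times_large_subsets_le) auto
  finally show ?thesis by (simp add: mult.assoc)
qed

lemma dag_mass_few_second_level_le:
  fixes q t :: real
  assumes q: "0 \<le> q" and "m < u" "real (u * u) * q \<le> real (u - m) * t"
  shows "dag_mass n q (\<lambda>G. k \<le> h1 n G \<and> h1 n G + u \<le> n \<and> h2 n G \<le> m) * min 1 (k * q) ^ u
    \<le> 2 ^ u * dag_mass n q (\<lambda>_. True) * (exp 1 * t * exp t) ^ (u - m)"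
proof -
  let ?A = "{G \<in> dags n. k \<le> h1 n G \<and> h1 n G + u \<le> n \<and> h2 n G \<le> m}"
  have "\<forall>G\<in>?A. \<exists>U. parent_closed ({1..n} - H1 n G) G U \<and> H2 n G \<subseteq> U \<and> card U = u
      \<and> u - m \<le> card (Restr G U)"
  proof
    fix G assume G: "G \<in> ?A"
    show "\<exists>U. parent_closed ({1..n} - H1 n G) G U \<and> H2 n G \<subseteq> U \<and> card U = u
      \<and> u - m \<le> card (Restr G U)"
    proof (rule peel_second_level[of G n m u])
      show "G \<in> dags n" "h2 n G \<le> m" "m \<le> u" "h1 n G + u \<le> n" using G assms(2) by auto
    qed blast
  qed
  then obtain U where U: "\<forall>G\<in>?A. parent_closed ({1..n} - H1 n G) G (U G) \<and> H2 n G \<subseteq> U G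
      \<and> card (U G) = u \<and> u - m \<le> card (Restr G (U G))"
    by (rule bchoice[THEN exE])
  have "dag_mass n q (\<lambda>G. k \<le> h1 n G \<and> h1 n G + u \<le> n \<and> h2 n G \<le> m) * min 1 (k * q) ^ u
      \<le> (\<Sum>(G, g)\<in>Sigma ?A (\<lambda>G. orphans (H1 n G) G (U G) \<rightarrow>\<^sub>E H1 n G).
            q ^ card G * q ^ card (orphans (H1 n G) G (U G)))"
    unfolding dag_mass_def
  proof (rule sum_mult_power_le_sum_PiE)
    fix G assume G: "G \<in> ?A"
    then have sub: "orphans (H1 n G) G (U G) \<subseteq> U G" "U G \<subseteq> {1..n}"
      using U unfolding orphans_def parent_closed_def by auto
    then have "finite (U G)" using finite_subset by blast
    then show "finite (orphans (H1 n G) G (U G)) \<and> card (orphans (H1 n G) G (U G)) \<le> u"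
      using finite_subset[OF sub(1)] card_mono[OF _ sub(1)] U G by auto
    show "min 1 (k * q) \<le> real (card (H1 n G)) * q"
      using G q by (simp add: h1_def min.coboundedI2 mult_right_mono)
    show "finite (H1 n G)" by simp
  next
    show "finite ?A" using finite_dags by simp
    show "0 \<le> q ^ card G" for G using q by simp
    show "0 \<le> min 1 (k * q)" "min 1 (k * q) \<le> 1" using q by simp_all
  qed
  also have "\<dots> \<le> 2 ^ u * dag_mass n q (\<lambda>_. True) * (exp 1 * t * exp t) ^ (u - m)"
  proof (rule sum_rewired_le[OF q _ assms(3)])
    show "0 < u - m" using assms(2) by simp
    show "?A \<subseteq> dags n" by blast
    fix G assume "G \<in> ?A"
    then show "parent_closed ({1..n} - H1 n G) G (U G) \<and> H2 n G \<subseteq> U G \<and> card (U G) = u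
        \<and> u - m \<le> card (Restr G (U G))" using U by blast
  qed
  finally show ?thesis .
qed

section \<open>Bounds in terms of X = 1/p\<close>

(* The rates t satisfy u^2 q <= (u - m) t for q = 1/(X - 1) and the choices
   u = 2m + 1, m = floor (X/(20 ln X)) resp. u = 4(m + 1), m = floor (X/ln^2 X). *)
definition first_level_rate :: "real \<Rightarrow> real" where
  "first_level_rate X = 4 * (X / (20 * ln X) + 1) / (X - 1)"

definition second_level_rate :: "real \<Rightarrow> real" where
  "second_level_rate X = 16 / 3 * (X / ln X ^ 2 + 1) / (X - 1)"

definition first_level_error :: "real \<Rightarrow> real" where
  "first_level_error X = exp 1 * first_level_rate X * exp (first_level_rate X)"

definition second_level_error :: "real \<Rightarrow> real" where
  "second_level_error X =
     (40 * ln X) ^ 4 * (exp 1 * second_level_rate X * exp (second_level_rate X)) ^ 3"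

lemma power_le_self: "0 \<le> x \<Longrightarrow> x \<le> 1 \<Longrightarrow> 0 < k \<Longrightarrow> x ^ k \<le> (x::real)"
  using power_decreasing[of 1 k x] by simp

lemma dag_mass_few_sources_error:
  fixes X :: real
  assumes L: "1 \<le> ln X" and M: "1 \<le> X / (20 * ln X)" and "X \<le> n" and err: "first_level_error X \<le> 1"
  shows "dag_mass n (1 / (X - 1)) (\<lambda>G. real (h1 n G) < X / (20 * ln X))
    \<le> dag_mass n (1 / (X - 1)) (\<lambda>_. True) * first_level_error X"
proof -
  define M where "M = X / (20 * ln X)"
  define m where "m = nat \<lfloor>M\<rfloor>"
  define q where "q = 1 / (X - 1)"
  define t where "t = first_level_rate X"
  have X: "20 \<le> X" using L M by (simp add: field_simps)
  have q: "0 < q" using X by (simp add: q_def)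
  have mM: "real m \<le> M" "M < m + 1" using M unfolding m_def M_def by linarith+
  have t: "t = 4 * (M + 1) * q" unfolding t_def first_level_rate_def M_def q_def by simp
  have "M \<le> X / 20" unfolding M_def using L X by (intro divide_left_mono) auto
  then have "real (2 * m + 1) \<le> X / 10 + 1" using mM by simp
  then have un: "2 * m + 1 \<le> n" using X assms(3) by linarith
  have "real ((2 * m + 1) * (2 * m + 1)) \<le> 4 * real (m + 1) * real (m + 1)"
    by (simp add: algebra_simps)
  then have "real ((2 * m + 1) * (2 * m + 1)) * q \<le> real (m + 1) * (4 * real (m + 1) * q)"
    using mult_right_mono[of _ _ q] q by (simp add: mult_ac)
  also have "\<dots> \<le> real (m + 1) * t" unfolding t using mM q by (intro mult_left_mono) auto
  also have "\<dots> = real (2 * m + 1 - m) * t" by (simp add: add.commute)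
  finally have rate: "real ((2 * m + 1) * (2 * m + 1)) * q \<le> real (2 * m + 1 - m) * t" .
  have "dag_mass n q (\<lambda>G. h1 n G \<le> m)
      \<le> dag_mass n q (\<lambda>_. True) * (exp 1 * t * exp t) ^ (2 * m + 1 - m)"
    by (rule dag_mass_few_sources_le[OF _ _ un rate]) (use q in auto)
  also have "\<dots> \<le> dag_mass n q (\<lambda>_. True) * first_level_error X"
    using q err mM unfolding first_level_error_def t_def[symmetric]
    by (intro mult_left_mono power_le_self dag_mass_nonneg) (auto simp: t)
  finally have "dag_mass n q (\<lambda>G. h1 n G \<le> m) \<le> dag_mass n q (\<lambda>_. True) * first_level_error X" .
  moreover have "dag_mass n q (\<lambda>G. real (h1 n G) < M) \<le> dag_mass n q (\<lambda>G. h1 n G \<le> m)"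
    using q unfolding m_def by (intro dag_mass_mono) linarith+
  ultimately show ?thesis unfolding q_def M_def by linarith
qed

lemma second_level_base_le_1:
  assumes "1 \<le> ln X" "0 \<le> second_level_rate X" "second_level_error X \<le> 1"
  shows "exp 1 * second_level_rate X * exp (second_level_rate X) \<le> 1"
proof -
  let ?E = "exp 1 * second_level_rate X * exp (second_level_rate X)"
  have "1 \<le> (40 * ln X) ^ 4" using assms(1) by (intro one_le_power) simp
  then have "?E ^ 3 \<le> (40 * ln X) ^ 4 * ?E ^ 3"
    using mult_right_mono[of 1 "(40 * ln X) ^ 4" "?E ^ 3"] assms(2) by simp
  then have "?E ^ 3 \<le> 1" using assms(3) unfolding second_level_error_def by linarith
  then show ?thesis using power_le_one_iff[of ?E 3] assms(2) by simp
qed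

lemma dag_mass_few_second_level_error:
  fixes X :: real
  assumes L: "1 \<le> ln X" and M: "1 \<le> X / (20 * ln X)" and err: "second_level_error X \<le> 1"
  defines "u \<equiv> 4 * (nat \<lfloor>X / ln X ^ 2\<rfloor> + 1)"
  shows "dag_mass n (1 / (X - 1))
      (\<lambda>G. X / (20 * ln X) \<le> h1 n G \<and> h1 n G + u \<le> n \<and> real (h2 n G) < X / ln X ^ 2)
    \<le> dag_mass n (1 / (X - 1)) (\<lambda>_. True) * second_level_error X"
proof -
  define M where "M = X / ln X ^ 2"
  define m where "m = nat \<lfloor>M\<rfloor>"
  define k where "k = nat \<lceil>X / (20 * ln X)\<rceil>"
  define q where "q = 1 / (X - 1)"
  define t where "t = second_level_rate X"
  define E where "E = exp 1 * t * exp t"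
  define Z where "Z = dag_mass n q (\<lambda>_. True)"
  define c where "c = 1 / (20 * ln X)"
  let ?mass = "dag_mass n q (\<lambda>G. k \<le> h1 n G \<and> h1 n G + u \<le> n \<and> h2 n G \<le> m)"
  have X: "20 \<le> X" using L M by (simp add: field_simps)
  have q: "0 < q" using X by (simp add: q_def)
  have mM: "real m \<le> M" using X L unfolding m_def M_def by simp
  have u: "u = 4 * (m + 1)" unfolding u_def m_def M_def ..
  have t: "t = 16 / 3 * (M + 1) * q" unfolding t_def second_level_rate_def M_def q_def by simp
  have "0 \<le> t" using q mM unfolding t by simp
  then have E: "0 \<le> E" "E \<le> 1"
    using second_level_base_le_1[OF L _ err] unfolding E_def t_def by simp_all
  have "real (u * u) * q = real (3 * (m + 1)) * (16 / 3 * real (m + 1) * q)"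
    unfolding u by (simp add: algebra_simps)
  also have "\<dots> \<le> real (u - m) * t"
    unfolding t u using mM q by (intro mult_mono) auto
  finally have rate: "real (u * u) * q \<le> real (u - m) * t" .
  have "c \<le> min 1 (k * q)"
  proof -
    have "c \<le> X / (20 * ln X) * q" unfolding c_def q_def using X L by (simp add: field_simps)
    also have "\<dots> \<le> k * q" unfolding k_def using q by (intro mult_right_mono) linarith+
    finally show ?thesis using L unfolding c_def by simp
  qed
  then have "?mass * c ^ u \<le> ?mass * min 1 (k * q) ^ u"
    using q L by (intro mult_left_mono power_mono dag_mass_nonneg) (auto simp: c_def)
  also have "\<dots> \<le> 2 ^ u * Z * E ^ (u - m)"
    unfolding Z_def E_def by (rule dag_mass_few_second_level_le[OF _ _ rate]) (use q u in auto)
  also have "\<dots> \<le> 2 ^ u * Z * E ^ (3 * (m + 1))"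
    using E q unfolding Z_def by (intro mult_left_mono power_decreasing) (auto simp: u dag_mass_nonneg)
  finally have "?mass * c ^ u \<le> 2 ^ u * Z * E ^ (3 * (m + 1))" .
  moreover have "0 < c" using L by (simp add: c_def)
  ultimately have "?mass \<le> 2 ^ u * Z * E ^ (3 * (m + 1)) / c ^ u"
    by (simp add: pos_le_divide_eq)
  also have "\<dots> = Z * ((2 / c) ^ u * E ^ (3 * (m + 1)))"
    by (simp add: power_divide)
  also have "\<dots> = Z * ((40 * ln X) ^ (4 * (m + 1)) * E ^ (3 * (m + 1)))"
    using L by (simp add: c_def u)
  also have "\<dots> = Z * ((40 * ln X) ^ 4 * E ^ 3) ^ (m + 1)"
    by (simp only: power_mult power_mult_distrib)
  also have "\<dots> \<le> Z * second_level_error X"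
    using err E L unfolding second_level_error_def E_def[symmetric] t_def[symmetric] Z_def
    by (intro mult_left_mono power_le_self dag_mass_nonneg) (use q in auto)
  finally have "?mass \<le> Z * second_level_error X" .
  moreover have "dag_mass n q (\<lambda>G. X / (20 * ln X) \<le> h1 n G \<and> h1 n G + u \<le> n \<and> real (h2 n G) < M)
      \<le> ?mass"
    using q unfolding m_def k_def by (intro dag_mass_mono) (auto simp: nat_le_iff ceiling_le_iff le_nat_iff le_floor_iff)
  ultimately show ?thesis unfolding q_def M_def Z_def by linarith
qed

lemma square_le_four_mult_halves: "real n ^ 2 \<le> 4 * real (n div 2 * (n - n div 2)) + 1"
proof -
  define a where "a = n div 2"
  have "n = 2 * a \<or> n = 2 * a + 1" unfolding a_def by presburger
  then show ?thesis
    by (elim disjE) (simp_all add: a_def[symmetric] power2_eq_square algebra_simps)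
qed

lemma exp_le_one_plus_odds:
  fixes p :: real
  assumes "p < 1"
  shows "exp p \<le> 1 + p / (1 - p)"
proof -
  have "1 - p \<le> exp (- p)" using exp_ge_add_one_self[of "- p"] by simp
  then have "1 / exp (- p) \<le> 1 / (1 - p)" using assms by (intro divide_left_mono) auto
  then show ?thesis using assms by (simp add: exp_minus field_simps)
qed

lemma dag_mass_many_sources_div:
  fixes p :: real
  assumes p: "0 < p" "p < 1" and n: "2 \<le> n" and u: "8 * u \<le> n"
    and ln_n: "16 * real (u + 2) * ln n \<le> p * real n ^ 2"
  shows "dag_mass n (p / (1 - p)) (\<lambda>G. n < h1 n G + u) \<le> dag_mass n (p / (1 - p)) (\<lambda>_. True) / n"
proof -
  define q where "q = p / (1 - p)"
  define a where "a = n div 2"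
  have q: "0 < q" using p by (simp add: q_def)
  have "real n * real (8 * u) \<le> real n * real n"
    using u by (intro mult_left_mono) auto
  then have nu: "real (n * u) \<le> real n ^ 2 / 8" by (simp add: power2_eq_square)
  have "2 * 2 \<le> real n * real n" using n by (intro mult_mono) auto
  then have sum_le: "real (n * u) + real n ^ 2 / 16 \<le> real (a * (n - a))"
    using square_le_four_mult_halves[of n] nu unfolding a_def power2_eq_square by linarith
  then have "real (n * u) \<le> real (a * (n - a))" using zero_le_power2[of "real n"] by linarith
  then have le: "n * u \<le> a * (n - a)" by (simp only: of_nat_le_iff)
  have K: "real n ^ 2 / 16 \<le> real (a * (n - a) - n * u)"
    unfolding of_nat_diff[OF le] using sum_le by linarith
  have "real u * real n ^ u * real n \<le> real n * real n ^ u * real n"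
    using u by (intro mult_right_mono) auto
  also have "\<dots> = real n ^ (u + 2)" by (simp add: power_add power2_eq_square)
  also have "\<dots> = exp (ln n) ^ (u + 2)" using n by simp
  also have "\<dots> = exp (real (u + 2) * ln n)" by (rule exp_of_nat_mult[symmetric])
  also have "\<dots> \<le> exp (p * real (a * (n - a) - n * u))"
  proof -
    have "real (u + 2) * ln n \<le> p * (real n ^ 2 / 16)" using ln_n by (simp add: algebra_simps)
    also have "\<dots> \<le> p * real (a * (n - a) - n * u)" using K p by (intro mult_left_mono) auto
    finally show ?thesis by simp
  qed
  also have "\<dots> = exp p ^ (a * (n - a) - n * u)"
    by (simp add: exp_of_nat_mult[symmetric] mult.commute)
  also have "\<dots> \<le> (1 + q) ^ (a * (n - a) - n * u)"
    using exp_le_one_plus_odds[OF p(2)] unfolding q_def by (intro power_mono) auto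
  finally have "real u * real n ^ u * real n * (1 + q) ^ (n * u)
      \<le> (1 + q) ^ (a * (n - a) - n * u) * (1 + q) ^ (n * u)"
    using q by (intro mult_right_mono) auto
  also have "\<dots> = (1 + q) ^ (a * (n - a))"
    using le by (simp flip: power_add)
  also have "\<dots> \<le> dag_mass n q (\<lambda>_. True)" unfolding a_def using q by (intro dag_mass_True_ge) simp
  finally have "real u * real n ^ u * (1 + q) ^ (n * u) \<le> dag_mass n q (\<lambda>_. True) / n"
    using n by (simp add: pos_le_divide_eq mult_ac)
  with dag_mass_many_sources_le[of q n u] q n show ?thesis unfolding q_def by simp
qed

lemma dag_mass_many_sources_error:
  fixes X :: real
  assumes L: "3 \<le> ln X" and M: "6 \<le> X / ln X ^ 2" and Xn: "6 * X \<le> n"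
    and ln_n: "80 * ln n \<le> (n * ln X / X) ^ 2"
  defines "u \<equiv> 4 * (nat \<lfloor>X / ln X ^ 2\<rfloor> + 1)"
  shows "dag_mass n (1 / (X - 1)) (\<lambda>G. n < h1 n G + u) \<le> dag_mass n (1 / (X - 1)) (\<lambda>_. True) / n"
proof -
  define M where "M = X / ln X ^ 2"
  have "3 * 3 \<le> ln X * ln X" using L by (intro mult_mono) auto
  then have L2: "9 \<le> ln X ^ 2" by (simp add: power2_eq_square)
  have "0 < ln X ^ 2" using L2 by linarith
  then have "6 * ln X ^ 2 \<le> X" using M by (simp add: pos_le_divide_eq)
  then have X: "54 \<le> X" using L2 by linarith
  have n: "324 \<le> real n" using X Xn by linarith
  have "real (nat \<lfloor>M\<rfloor>) \<le> M" using M unfolding M_def by simp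
  moreover have "real (u + 2) = 4 * real (nat \<lfloor>M\<rfloor>) + 6" unfolding u_def M_def by simp
  ultimately have u: "real (u + 2) \<le> 5 * M" using M unfolding M_def by linarith
  have "M \<le> X / 9" unfolding M_def using L2 X by (intro divide_left_mono) auto
  then have u8: "8 * u \<le> n" using u Xn by linarith
  have ln_u: "16 * real (u + 2) * ln n \<le> 1 / X * real n ^ 2"
  proof -
    have "16 * real (u + 2) * ln n \<le> 16 * (5 * M) * ln n"
      using u n by (intro mult_right_mono) auto
    also have "\<dots> = X / ln X ^ 2 * (80 * ln n)" unfolding M_def by simp
    also have "\<dots> \<le> X / ln X ^ 2 * (n * ln X / X) ^ 2"
      using ln_n X L by (intro mult_left_mono) auto
    also have "\<dots> = 1 / X * real n ^ 2" using X L by (simp add: field_simps power2_eq_square)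
    finally show ?thesis .
  qed
  have "1 / (X - 1) = (1 / X) / (1 - 1 / X)" using X by (simp add: field_simps)
  then show ?thesis
    using dag_mass_many_sources_div[of "1 / X" n u] X n u8 ln_u by simp
qed

lemma eighty_ln_le_square:
  fixes X :: real and n :: nat
  assumes X: "0 < X" "1 \<le> ln X" and Xn: "6 * X \<le> n" and ln_n: "9 \<le> ln n" "80 * ln n \<le> n"
  shows "80 * ln n \<le> (n * ln X / X) ^ 2"
proof (cases "X ^ 2 \<le> n")
  case True
  have "80 * ln n \<le> real n * 1 * 1" using ln_n by simp
  also have "\<dots> \<le> n * (n / X ^ 2) * ln X ^ 2"
    using True X by (intro mult_mono) (auto simp: one_le_power)
  also have "\<dots> = (n * ln X / X) ^ 2" by (simp add: power2_eq_square)
  finally show ?thesis .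
next
  case False
  then have "ln n < ln (X ^ 2)" using X ln_n by (subst ln_less_cancel_iff) auto
  then have "ln n / 2 \<le> ln X" using X by (simp add: ln_realpow)
  moreover have "6 \<le> n / X" using X Xn by (simp add: field_simps)
  ultimately have "6 * (ln n / 2) \<le> n / X * ln X" using ln_n by (intro mult_mono) auto
  then have "(3 * ln n) ^ 2 \<le> (n * ln X / X) ^ 2" using ln_n by (intro power_mono) auto
  moreover have "80 * ln n \<le> (3 * ln n) ^ 2" using ln_n by (simp add: power2_eq_square)
  ultimately show ?thesis by linarith
qed

definition large_scale :: "real \<Rightarrow> bool" where
  "large_scale X \<longleftrightarrow> 3 \<le> ln X \<and> 1 \<le> X / (20 * ln X) \<and> 6 \<le> X / ln X ^ 2
     \<and> first_level_error X \<le> 1 \<and> second_level_error X \<le> 1"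

lemma one_minus_dag_prob_le:
  fixes p :: real
  assumes p: "0 < p" "p < 1" and X: "large_scale (1 / p)" and n: "6 \<le> p * n"
    and ln_n: "9 \<le> ln n" "80 * ln n \<le> n"
  shows "1 - dag_prob n p (\<lambda>E. real (h1 n E) \<ge> (1 / p) / (20 * ln (1 / p)) \<and>
            real (h2 n E) \<ge> (1 / p) / (ln (1 / p))^2)
    \<le> first_level_error (1 / p) + second_level_error (1 / p) + 1 / n"
proof -
  define X where "X = 1 / p"
  define q where "q = 1 / (X - 1)"
  define u where "u = 4 * (nat \<lfloor>X / ln X ^ 2\<rfloor> + 1)"
  define Z where "Z = dag_mass n q (\<lambda>_. True)"
  have L: "3 \<le> ln X" "1 \<le> X / (20 * ln X)" "6 \<le> X / ln X ^ 2"
    and err: "first_level_error X \<le> 1" "second_level_error X \<le> 1"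
    using X unfolding X_def large_scale_def by auto
  have L1: "1 \<le> ln X" using L(1) by simp
  have X0: "0 < X" using p by (simp add: X_def)
  have Xn: "6 * X \<le> n" using n p by (simp add: X_def field_simps)
  have q: "p / (1 - p) = q" unfolding q_def X_def using p by (simp add: field_simps)
  have q0: "0 \<le> q" unfolding q[symmetric] using p by simp
  have Zpos: "0 < Z" unfolding Z_def using q0 by (rule dag_mass_True_pos)
  have "1 - dag_prob n p (\<lambda>E. real (h1 n E) \<ge> X / (20 * ln X) \<and> real (h2 n E) \<ge> X / (ln X)^2)
      = dag_mass n q (\<lambda>G. \<not> (X / (20 * ln X) \<le> real (h1 n G) \<and> X / (ln X)^2 \<le> real (h2 n G))) / Z"
    unfolding one_minus_dag_prob[OF less_imp_le[OF p(1)] p(2)] q Z_def ..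
  also have "\<dots> \<le> (dag_mass n q (\<lambda>G. real (h1 n G) < X / (20 * ln X))
      + dag_mass n q (\<lambda>G. X / (20 * ln X) \<le> h1 n G \<and> h1 n G + u \<le> n \<and> real (h2 n G) < X / ln X ^ 2)
      + dag_mass n q (\<lambda>G. n < h1 n G + u)) / Z"
    using Zpos by (intro divide_right_mono dag_mass_small_levels_le[OF q0]) simp
  also have "\<dots> \<le> (Z * first_level_error X + Z * second_level_error X + Z / n) / Z"
  proof (intro divide_right_mono add_mono)
    show "dag_mass n q (\<lambda>G. real (h1 n G) < X / (20 * ln X)) \<le> Z * first_level_error X"
      unfolding q_def Z_def using Xn X0 by (intro dag_mass_few_sources_error[OF L1 L(2) _ err(1)]) simp
    show "dag_mass n q (\<lambda>G. X / (20 * ln X) \<le> h1 n G \<and> h1 n G + u \<le> n \<and> real (h2 n G) < X / ln X ^ 2)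
        \<le> Z * second_level_error X"
      unfolding q_def Z_def u_def by (rule dag_mass_few_second_level_error[OF L1 L(2) err(2)])
    show "dag_mass n q (\<lambda>G. n < h1 n G + u) \<le> Z / n"
      unfolding q_def Z_def u_def
      by (rule dag_mass_many_sources_error[OF L(1) L(3) Xn eighty_ln_le_square[OF X0 L1 Xn ln_n]])
  qed (use Zpos in simp)
  also have "\<dots> = first_level_error X + second_level_error X + 1 / n"
    using Zpos by (simp add: field_simps)
  finally show ?thesis unfolding X_def .
qed

section \<open>Asymptotics\<close>

lemma first_level_error_tendsto: "(first_level_error \<longlongrightarrow> 0) at_top"
  unfolding first_level_error_def[abs_def] first_level_rate_def by real_asymp

lemma second_level_error_tendsto: "(second_level_error \<longlongrightarrow> 0) at_top"
  unfolding second_level_error_def[abs_def] second_level_rate_def by real_asymp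

lemma eventually_large_scale: "eventually large_scale at_top"
proof -
  have "filterlim (\<lambda>X::real. ln X) at_top at_top"
    and "filterlim (\<lambda>X::real. X / (20 * ln X)) at_top at_top"
    and "filterlim (\<lambda>X::real. X / ln X ^ 2) at_top at_top"
    by real_asymp+
  then have "eventually (\<lambda>X::real. 3 \<le> ln X) at_top"
    "eventually (\<lambda>X::real. 1 \<le> X / (20 * ln X)) at_top"
    "eventually (\<lambda>X::real. 6 \<le> X / ln X ^ 2) at_top"
    unfolding filterlim_at_top by blast+
  moreover have "eventually (\<lambda>X. first_level_error X < 1) at_top"
    "eventually (\<lambda>X. second_level_error X < 1) at_top"
    using order_tendstoD(2)[OF first_level_error_tendsto zero_less_one]
      order_tendstoD(2)[OF second_level_error_tendsto zero_less_one] .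
  ultimately show ?thesis
    unfolding large_scale_def by eventually_elim auto
qed

lemma eventually_ln_bounds: "eventually (\<lambda>n. 9 \<le> ln (real n) \<and> 80 * ln (real n) \<le> real n) sequentially"
proof -
  have "filterlim (\<lambda>x::real. ln x) at_top at_top" "filterlim (\<lambda>x::real. x - 80 * ln x) at_top at_top"
    by real_asymp+
  then have "eventually (\<lambda>x::real. 9 \<le> ln x) at_top" "eventually (\<lambda>x::real. 0 \<le> x - 80 * ln x) at_top"
    unfolding filterlim_at_top by blast+
  then have "eventually (\<lambda>x::real. 9 \<le> ln x \<and> 80 * ln x \<le> x) at_top"
    by eventually_elim simp
  then show ?thesis using filterlim_real_sequentially by (rule eventually_compose_filterlim)
qed

lemma eventually_probability_bounds:
  fixes p :: "nat \<Rightarrow> real"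
  assumes "\<forall>\<^sub>F n in sequentially. 6 / real n \<le> p n \<and> p n < 1"
  shows "eventually (\<lambda>n. 0 < p n \<and> p n < 1 \<and> 6 \<le> p n * n) sequentially"
  using assms eventually_gt_at_top[of 0]
proof eventually_elim
  case (elim n)
  then have "0 < 6 / real n" "6 / real n \<le> p n" by auto
  then have "0 < p n" by linarith
  with elim show ?case by (simp add: divide_le_eq)
qed

lemma filterlim_inverse_if_times_ln:
  fixes p :: "nat \<Rightarrow> real"
  assumes pos: "eventually (\<lambda>n. 0 < p n) sequentially" and "(\<lambda>n. p n * ln (real n)) \<longlonglongrightarrow> 0"
  shows "filterlim (\<lambda>n. 1 / p n) at_top sequentially"
proof -
  have "eventually (\<lambda>n. 0 \<le> p n) sequentially" using pos by (rule eventually_mono) simp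
  moreover have "eventually (\<lambda>n. p n \<le> p n * ln (real n)) sequentially"
    using pos eventually_ln_bounds
  proof eventually_elim
    case (elim n)
    then show ?case using mult_left_mono[of 1 "ln (real n)" "p n"] by simp
  qed
  ultimately have "p \<longlonglongrightarrow> 0" using tendsto_const assms(2) by (rule tendsto_sandwich)
  then show ?thesis using filterlim_inverse_at_top[OF _ pos] by (simp add: inverse_eq_divide)
qed

theorem mainTheorem7:
  fixes p :: "nat \<Rightarrow> real"
  assumes "\<forall>\<^sub>F n in sequentially. 6 / real n \<le> p n \<and> p n < 1"
    and "(\<lambda>n. p n * ln (real n)) \<longlonglongrightarrow> 0"
  shows "(\<lambda>n. dag_prob n (p n) (\<lambda>E.
            real (h1 n E) \<ge> (1 / p n) / (20 * ln (1 / p n)) \<and>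
            real (h2 n E) \<ge> (1 / p n) / (ln (1 / p n))^2)) \<longlonglongrightarrow> 1"
proof -
  let ?P = "\<lambda>n. dag_prob n (p n) (\<lambda>E.
            real (h1 n E) \<ge> (1 / p n) / (20 * ln (1 / p n)) \<and>
            real (h2 n E) \<ge> (1 / p n) / (ln (1 / p n))^2)"
  let ?err = "\<lambda>n. first_level_error (1 / p n) + second_level_error (1 / p n) + 1 / real n"
  note p = eventually_probability_bounds[OF assms(1)]
  have "eventually (\<lambda>n. 0 < p n) sequentially" using p by (rule eventually_mono) simp
  then have X: "filterlim (\<lambda>n. 1 / p n) at_top sequentially"
    using assms(2) by (rule filterlim_inverse_if_times_ln)
  have "eventually (\<lambda>n. large_scale (1 / p n)) sequentially"
    using X eventually_large_scale by (rule eventually_compose_filterlim[rotated])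
  with p eventually_ln_bounds have bound: "eventually (\<lambda>n. 1 - ?P n \<le> ?err n) sequentially"
  proof eventually_elim
    case (elim n)
    then show ?case by (intro one_minus_dag_prob_le) auto
  qed
  have "?err \<longlonglongrightarrow> 0 + 0 + 0"
    by (intro tendsto_add filterlim_compose[OF first_level_error_tendsto X]
        filterlim_compose[OF second_level_error_tendsto X] lim_const_over_n)
  then have err: "?err \<longlonglongrightarrow> 0" by simp
  have "eventually (\<lambda>n. 0 \<le> 1 - ?P n) sequentially"
    using p by eventually_elim (simp add: dag_prob_le_1)
  then have "(\<lambda>n. 1 - ?P n) \<longlonglongrightarrow> 0"
    using bound tendsto_const err by (rule tendsto_sandwich)
  then have "(\<lambda>n. 1 - (1 - ?P n)) \<longlonglongrightarrow> 1 - 0" by (intro tendsto_diff tendsto_const)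
  then show ?thesis by simp
qed

end
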